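(* Let $X\in\mathbb R^{n\times p}$ be fixed, let $\mathbf y\in\mathbb R^n$ be a random vector with independent components satisfying, for some $\sigma\ge0$, $\mathbb E\,e^{t(\mathbf y_i-\mathbb E\mathbf y_i)}\le e^{\sigma^2t^2/2}$ for all $i$ and all $t\in\mathbb R$, and let $\hat Q(\beta)=\|X\beta-\mathbf y\|_2^2$. Let $\mathrm{cl}$ be a coding length with coding complexity $c(\cdot)$. Fix a target $\bar\beta\in\mathbb R^p$ and $\eta\in(0,1)$. Then with probability exceeding $1-\eta$, for all $\epsilon\ge0$ and all $\hat\beta\in\mathbb R^p$ such that $\hat Q(\hat\beta)\le\hat Q(\bar\beta)+\epsilon$, we have \[ \|X\hat\beta-\mathbb E\mathbf y\|_2\le\|X\bar\beta-\mathbb E\mathbf y\|_2+\sigma\sqrt{2\ln(6/\eta)}+2\left(7.4\sigma^2c(\hat\beta)+4.7\sigma^2\ln(6/\eta)+\epsilon\right)^{1/2}. \] Moreover, if the coding complexity $c(\cdot)$ is sub-additive, then (on the same event) \[ n\,\rho_-(c(\hat\beta)+c(\bar\beta))\,\|\hat\beta-\bar\beta\|_2^2\le 10\|X\bar\beta-\mathbb E\mathbf y\|_2^2+37\sigma^2c(\hat\beta)+29\sigma^2\ln(6/\eta)+2.5\epsilon. \]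
   Context: Let $\mathcal I=\{1,\ldots,p\}$ and $\mathrm{supp}(\beta)=\{j:\beta_j\ne0\}$. A function $\mathrm{cl}$ from subsets of $\mathcal I$ to $[0,\infty]$ is a coding length if $\sum_{F\subset\mathcal I,\,F\ne\emptyset}2^{-\mathrm{cl}(F)}\le1$, with $\mathrm{cl}(\emptyset)=0$. The coding complexity is $c(F)=|F|+\mathrm{cl}(F)$ for $F\subset\mathcal I$, and $c(\beta)=\min\{c(F):\mathrm{supp}(\beta)\subset F\}$ for $\beta\in\mathbb R^p$. It is sub-additive if $c(F\cup F')\le c(F)+c(F')$ for all $F,F'\subset\mathcal I$. For $F\subset\mathcal I$, $\rho_-(F)=\inf\{\frac1n\|X\beta\|_2^2/\|\beta\|_2^2:\beta\ne0,\ \mathrm{supp}(\beta)\subset F\}$, and for $s>0$, $\rho_-(s)=\inf\{\rho_-(F):F\subset\mathcal I,\ c(F)\le s\}$. *)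

theory Defs
  imports "HOL-Probability.Probability"
begin

text \<open>Index set I = {0..<p} (0-based rendering of {1..p}); vectors in R^p are
  functions nat => real of which only the coordinates j < p matter.\<close>

definition supp :: "nat \<Rightarrow> (nat \<Rightarrow> real) \<Rightarrow> nat set" where
  "supp p \<beta> = {j \<in> {..<p}. \<beta> j \<noteq> 0}"

definition cl_weight :: "ereal \<Rightarrow> real" where
  "cl_weight e = (if e = \<infinity> then 0 else 2 powr (- real_of_ereal e))"

definition is_coding_length :: "nat \<Rightarrow> (nat set \<Rightarrow> ereal) \<Rightarrow> bool" where
  "is_coding_length p cl \<longleftrightarrow>
     cl {} = 0 \<and> (\<forall>F. F \<subseteq> {..<p} \<longrightarrow> 0 \<le> cl F) \<and>
     (\<Sum>F \<in> {F. F \<subseteq> {..<p} \<and> F \<noteq> {}}. cl_weight (cl F)) \<le> 1"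

definition cc_set :: "(nat set \<Rightarrow> ereal) \<Rightarrow> nat set \<Rightarrow> ereal" where
  "cc_set cl F = ereal (real (card F)) + cl F"

definition cc_vec :: "nat \<Rightarrow> (nat set \<Rightarrow> ereal) \<Rightarrow> (nat \<Rightarrow> real) \<Rightarrow> ereal" where
  "cc_vec p cl \<beta> = Inf {cc_set cl F | F. F \<subseteq> {..<p} \<and> supp p \<beta> \<subseteq> F}"

definition subadditive_cc :: "nat \<Rightarrow> (nat set \<Rightarrow> ereal) \<Rightarrow> bool" where
  "subadditive_cc p cl \<longleftrightarrow>
     (\<forall>F F'. F \<subseteq> {..<p} \<longrightarrow> F' \<subseteq> {..<p} \<longrightarrow> cc_set cl (F \<union> F') \<le> cc_set cl F + cc_set cl F')"

definition matvec :: "nat \<Rightarrow> (nat \<Rightarrow> nat \<Rightarrow> real) \<Rightarrow> (nat \<Rightarrow> real) \<Rightarrow> nat \<Rightarrow> real" where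
  "matvec p X \<beta> = (\<lambda>i. \<Sum>j<p. X i j * \<beta> j)"

definition norm2 :: "nat \<Rightarrow> (nat \<Rightarrow> real) \<Rightarrow> real" where
  "norm2 m v = sqrt (\<Sum>i<m. (v i)\<^sup>2)"

definition rho_minus_set :: "nat \<Rightarrow> nat \<Rightarrow> (nat \<Rightarrow> nat \<Rightarrow> real) \<Rightarrow> nat set \<Rightarrow> ereal" where
  "rho_minus_set n p X F =
     Inf {ereal ((1 / real n) * (norm2 n (matvec p X \<beta>))\<^sup>2 / (norm2 p \<beta>)\<^sup>2) | \<beta>.
            (\<exists>j<p. \<beta> j \<noteq> 0) \<and> supp p \<beta> \<subseteq> F}"

definition rho_minus :: "nat \<Rightarrow> nat \<Rightarrow> (nat \<Rightarrow> nat \<Rightarrow> real) \<Rightarrow> (nat set \<Rightarrow> ereal) \<Rightarrow> ereal \<Rightarrow> ereal" where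
  "rho_minus n p X cl s = Inf {rho_minus_set n p X F | F. F \<subseteq> {..<p} \<and> cc_set cl F \<le> s}"

end

theory Submission
  imports Defs
begin

text \<open>Write \<xi> = y - E y. For a set F of coordinates let P_F be the orthogonal projection onto
  the span of X \<beta>bar and the columns of X indexed by F, a space of dimension at most |F| + 1.
  Sub-Gaussian noise has exponential moments E exp (|P_F \<xi>|^2 / (4 \<sigma>^2)) \<le> sqrt 2 ^ (|F| + 1),
  so by a Chernoff bound |P_F \<xi>|^2 exceeds \<sigma>^2 (5.5 c(F) + 4.3 ln (6 / \<eta>)) with probability
  at most \<eta> / 3 * 2 powr (- cl F); the Kraft inequality for cl makes the union bound over all F
  smaller than \<eta>. On the complementary event, if the support of \<beta>hat lies in F then
  X \<beta>hat - X \<beta>bar lies in the range of P_F, so the noise correlates with it by at most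
  |P_F \<xi>| |X \<beta>hat - X \<beta>bar|, and comparing the two least squares residuals yields both
  inequalities by elementary algebra.\<close>

section \<open>Euclidean geometry of coordinate vectors\<close>

definition dotp :: "nat \<Rightarrow> (nat \<Rightarrow> real) \<Rightarrow> (nat \<Rightarrow> real) \<Rightarrow> real" where
  "dotp n u v = (\<Sum>i<n. u i * v i)"

lemma norm2_eq_L2_set: "norm2 n v = L2_set v {..<n}"
  by (simp add: norm2_def L2_set_def)

lemma norm2_power2: "(norm2 n v)\<^sup>2 = dotp n v v"
  by (simp add: norm2_def dotp_def power2_eq_square sum_nonneg)

lemma norm2_nonneg: "0 \<le> norm2 n v"
  by (simp add: norm2_def sum_nonneg)

lemma norm2_diff_le: "norm2 n (\<lambda>i. u i - v i) \<le> norm2 n u + norm2 n v"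
  using L2_set_triangle_ineq[of u "\<lambda>i. - v i" "{..<n}"]
  by (simp add: norm2_eq_L2_set L2_set_def)

lemma dotp_le_norm2_mult: "dotp n u v \<le> norm2 n u * norm2 n v"
proof -
  have "dotp n u v \<le> (\<Sum>i<n. \<bar>u i\<bar> * \<bar>v i\<bar>)"
    unfolding dotp_def by (intro sum_mono) (simp add: abs_mult[symmetric])
  also have "\<dots> \<le> norm2 n u * norm2 n v"
    unfolding norm2_eq_L2_set by (rule L2_set_mult_ineq)
  finally show ?thesis .
qed

lemma dotp_commute: "dotp n u v = dotp n v u"
  by (simp add: dotp_def mult.commute)

lemma dotp_diff_self:
  "dotp n (\<lambda>i. u i - v i) (\<lambda>i. u i - v i) = dotp n u u - 2 * dotp n u v + dotp n v v"
  by (simp add: dotp_def sum_subtractf sum.distrib sum_distrib_left algebra_simps)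

lemma dotp_diff_right: "dotp n u (\<lambda>i. v i - w i) = dotp n u v - dotp n u w"
  by (simp add: dotp_def sum_subtractf algebra_simps)

lemma dotp_lincomb_left: "dotp n (\<lambda>i. \<Sum>j<d. c j * e j i) u = (\<Sum>j<d. c j * dotp n (e j) u)"
  unfolding dotp_def
  by (simp add: sum_distrib_left sum_distrib_right sum.swap[of _ "{..<d}"] mult.assoc)

lemma dotp_add_scaled_left: "dotp n (\<lambda>i. v i + a * z i) u = dotp n v u + a * dotp n z u"
  by (simp add: dotp_def sum.distrib sum_distrib_left algebra_simps)

lemma dotp_add_scaled_right: "dotp n u (\<lambda>i. v i + a * z i) = dotp n u v + a * dotp n u z"
  by (simp add: dotp_def sum.distrib sum_distrib_left algebra_simps)

lemma dotp_scale_right: "dotp n u (\<lambda>i. a * z i) = a * dotp n u z"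
  by (simp add: dotp_def sum_distrib_left algebra_simps)

lemma dotp_cong:
  "(\<And>i. i < n \<Longrightarrow> u i = u' i) \<Longrightarrow> (\<And>i. i < n \<Longrightarrow> v i = v' i) \<Longrightarrow> dotp n u v = dotp n u' v'"
  unfolding dotp_def by (intro sum.cong) auto

lemma dotp_self_nonneg: "0 \<le> dotp n u u"
  unfolding dotp_def by (intro sum_nonneg) auto

lemma dotp_self_eq_0: "dotp n u u = 0 \<Longrightarrow> i < n \<Longrightarrow> u i = 0"
  unfolding dotp_def by (subst (asm) sum_nonneg_eq_0_iff) auto

definition orthonormal :: "nat \<Rightarrow> (nat \<Rightarrow> nat \<Rightarrow> real) \<Rightarrow> nat \<Rightarrow> bool" where
  "orthonormal n e d \<longleftrightarrow> (\<forall>j<d. \<forall>k<d. dotp n (e j) (e k) = (if j = k then 1 else 0))"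

definition in_span :: "nat \<Rightarrow> (nat \<Rightarrow> nat \<Rightarrow> real) \<Rightarrow> nat \<Rightarrow> (nat \<Rightarrow> real) \<Rightarrow> bool" where
  "in_span n e d v \<longleftrightarrow> (\<exists>c. \<forall>i<n. v i = (\<Sum>j<d. c j * e j i))"

lemma orthonormal_Suc_D: "orthonormal n e (Suc d) \<Longrightarrow> orthonormal n e d"
  by (auto simp: orthonormal_def)

lemma orthonormal_coeff:
  assumes "orthonormal n e d" "k < d"
  shows "dotp n (\<lambda>i. \<Sum>j<d. c j * e j i) (e k) = c k"
proof -
  have "dotp n (\<lambda>i. \<Sum>j<d. c j * e j i) (e k) = (\<Sum>j<d. c j * (if j = k then 1 else 0))"
    unfolding dotp_lincomb_left using assms by (intro sum.cong) (auto simp: orthonormal_def)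
  also have "\<dots> = c k" using assms(2) by (simp add: if_distrib cong: if_cong)
  finally show ?thesis .
qed

lemma orthonormal_dotp_self:
  assumes "orthonormal n e d"
  shows "dotp n (\<lambda>i. \<Sum>j<d. c j * e j i) (\<lambda>i. \<Sum>j<d. c j * e j i) = (\<Sum>j<d. (c j)\<^sup>2)"
proof -
  have "dotp n (\<lambda>i. \<Sum>j<d. c j * e j i) (\<lambda>i. \<Sum>j<d. c j * e j i)
      = (\<Sum>k<d. c k * dotp n (\<lambda>i. \<Sum>j<d. c j * e j i) (e k))"
    by (subst dotp_commute) (simp add: dotp_lincomb_left dotp_commute)
  also have "\<dots> = (\<Sum>k<d. c k * c k)"
    using assms by (intro sum.cong) (auto simp: orthonormal_coeff)
  finally show ?thesis by (simp add: power2_eq_square)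
qed

lemma in_span_sum:
  assumes "finite F" "\<And>j. j \<in> F \<Longrightarrow> in_span n e d (g j)"
  shows "in_span n e d (\<lambda>i. \<Sum>j\<in>F. a j * g j i)"
  using assms
proof (induction F rule: finite_induct)
  case empty
  show ?case unfolding in_span_def by (rule exI[of _ "\<lambda>_. 0"]) simp
next
  case (insert x F)
  obtain c where c: "\<forall>i<n. (\<Sum>j\<in>F. a j * g j i) = (\<Sum>j<d. c j * e j i)"
    using insert by (auto simp: in_span_def)
  obtain c' where c': "\<forall>i<n. g x i = (\<Sum>j<d. c' j * e j i)"
    using insert.prems by (auto simp: in_span_def)
  show ?case unfolding in_span_def
    by (rule exI[of _ "\<lambda>j. a x * c' j + c j"])
       (use insert.hyps c c' in \<open>auto simp: sum.distrib sum_distrib_left algebra_simps\<close>)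
qed

lemma in_span_diff:
  assumes "in_span n e d u" "in_span n e d v"
  shows "in_span n e d (\<lambda>i. u i - v i)"
proof -
  from assms obtain c c' where "\<forall>i<n. u i = (\<Sum>j<d. c j * e j i)" "\<forall>i<n. v i = (\<Sum>j<d. c' j * e j i)"
    by (auto simp: in_span_def)
  then show ?thesis unfolding in_span_def
    by (intro exI[of _ "\<lambda>j. c j - c' j"]) (auto simp: sum_subtractf left_diff_distrib)
qed

lemma orthonormal_extend:
  assumes on: "orthonormal n e d"
  shows "\<exists>e' d'. d' \<le> Suc d \<and> orthonormal n e' d' \<and> in_span n e' d' v
    \<and> (\<forall>u. in_span n e d u \<longrightarrow> in_span n e' d' u)"
proof -
  define r where "r = (\<lambda>i. v i - (\<Sum>j<d. dotp n v (e j) * e j i))"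
  have v_eq: "v i = (\<Sum>j<d. dotp n v (e j) * e j i) + r i" for i by (simp add: r_def)
  show ?thesis
  proof (cases "dotp n r r = 0")
    case True
    have "in_span n e d v" unfolding in_span_def
      using dotp_self_eq_0[OF True] by (intro exI[of _ "\<lambda>j. dotp n v (e j)"]) (auto simp: v_eq)
    with on show ?thesis by (intro exI[of _ e] exI[of _ d]) auto
  next
    case False
    define s where "s = sqrt (dotp n r r)"
    have s: "s > 0" using False dotp_self_nonneg[of n r] by (simp add: s_def)
    define e' where "e' = e(d := (\<lambda>i. r i / s))"
    have r_orth: "dotp n (\<lambda>i. r i / s) (e k) = 0" if "k < d" for k
    proof -
      have "dotp n r (e k) = dotp n v (e k) - dotp n (\<lambda>i. \<Sum>j<d. dotp n v (e j) * e j i) (e k)"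
        by (simp add: r_def dotp_def sum_subtractf left_diff_distrib)
      also have "\<dots> = 0" using orthonormal_coeff[OF on that] by simp
      finally show ?thesis by (simp add: dotp_def sum_divide_distrib[symmetric])
    qed
    have r_unit: "dotp n (\<lambda>i. r i / s) (\<lambda>i. r i / s) = 1"
      using s False dotp_self_nonneg[of n r]
      by (simp add: dotp_def sum_divide_distrib[symmetric] s_def power2_eq_square[symmetric] divide_simps)
    have "orthonormal n e' (Suc d)"
      unfolding orthonormal_def
    proof (intro allI impI)
      fix j k assume j: "j < Suc d" and k: "k < Suc d"
      show "dotp n (e' j) (e' k) = (if j = k then 1 else 0)"
        using j k r_orth[of j] r_orth[of k] r_unit on
        by (cases "j = d"; cases "k = d") (auto simp: e'_def dotp_commute orthonormal_def)
    qed
    moreover have "in_span n e' (Suc d) u" if "in_span n e d u" for u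
    proof -
      from that obtain c where "\<forall>i<n. u i = (\<Sum>j<d. c j * e j i)" by (auto simp: in_span_def)
      then show ?thesis unfolding in_span_def
        by (intro exI[of _ "c(d := 0)"]) (auto simp: e'_def intro!: sum.cong)
    qed
    moreover have "in_span n e' (Suc d) v" unfolding in_span_def
      using s by (intro exI[of _ "(\<lambda>j. dotp n v (e j))(d := s)"]) (auto simp: e'_def v_eq intro!: sum.cong)
    ultimately show ?thesis by (intro exI[of _ e'] exI[of _ "Suc d"]) auto
  qed
qed

lemma gram_schmidt:
  "\<exists>e d. d \<le> length V \<and> orthonormal n e d \<and> (\<forall>v\<in>set V. in_span n e d v)"
proof (induction V)
  case Nil
  show ?case by (intro exI[of _ "\<lambda>_ _. 0"] exI[of _ 0]) (auto simp: orthonormal_def)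
next
  case (Cons v V)
  then obtain e d where d: "d \<le> length V" "orthonormal n e d" "\<forall>u\<in>set V. in_span n e d u"
    by blast
  then obtain e' d' where "d' \<le> Suc d" "orthonormal n e' d'" "in_span n e' d' v"
    "\<forall>u. in_span n e d u \<longrightarrow> in_span n e' d' u"
    using orthonormal_extend[of n e d v] by blast
  with d show ?case by (intro exI[of _ e'] exI[of _ d']) auto
qed

lemma dotp_le_projection_norm2:
  assumes on: "orthonormal n e d" and sp: "in_span n e d v"
  shows "dotp n u v \<le> sqrt (\<Sum>j<d. (dotp n u (e j))\<^sup>2) * norm2 n v"
proof -
  from sp obtain c where c: "\<forall>i<n. v i = (\<Sum>j<d. c j * e j i)" by (auto simp: in_span_def)
  have "dotp n u v = dotp n u (\<lambda>i. \<Sum>j<d. c j * e j i)"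
    using c by (auto intro: dotp_cong)
  also have "\<dots> = dotp d c (\<lambda>j. dotp n u (e j))"
    by (subst dotp_commute) (simp add: dotp_lincomb_left dotp_commute dotp_def)
  also have "\<dots> \<le> norm2 d c * norm2 d (\<lambda>j. dotp n u (e j))"
    by (rule dotp_le_norm2_mult)
  also have "norm2 d c = norm2 n v"
  proof -
    have "dotp d c c = dotp n v v"
      using c orthonormal_dotp_self[OF on, of c] by (auto simp: dotp_def power2_eq_square intro: sum.cong)
    then show ?thesis by (simp add: norm2_def dotp_def power2_eq_square)
  qed
  finally show ?thesis by (simp add: norm2_def mult.commute)
qed

section \<open>Comparing two least squares residuals\<close>

lemma le_add_twice_sqrt_of_sq_le:
  fixes A B \<delta> \<epsilon> :: real
  assumes "0 \<le> A" "0 \<le> B" "0 \<le> \<delta>" "0 \<le> \<epsilon>"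
    and "A\<^sup>2 \<le> B\<^sup>2 + 2 * \<delta> * (A + B) + \<epsilon>"
  shows "A \<le> B + 2 * sqrt (\<delta>\<^sup>2 + \<epsilon>)"
proof (rule ccontr)
  define r where "r = sqrt (\<delta>\<^sup>2 + \<epsilon>)"
  assume "\<not> A \<le> B + 2 * sqrt (\<delta>\<^sup>2 + \<epsilon>)"
  hence lt: "B + 2 * r < A" by (simp add: r_def)
  have r0: "0 \<le> r" and rd: "\<delta> \<le> r" and r2: "r\<^sup>2 = \<delta>\<^sup>2 + \<epsilon>"
    using assms by (auto simp: r_def intro: real_le_rsqrt)
  txt \<open>Since r^2 = \<delta>^2 + \<epsilon>, the positive product below equals A^2 - B^2 - 2 \<delta> (A + B) - \<epsilon>
    minus the nonnegative term that follows it.\<close>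
  have "0 < (A - (B + 2*r)) * (A + (B + 2*r) - 2*\<delta>)"
    using lt rd r0 assms by (intro mult_pos_pos) auto
  moreover have "0 \<le> 4*B*(r-\<delta>) + (3*r - \<delta>)*(r-\<delta>)"
    using rd r0 assms by (intro add_nonneg_nonneg mult_nonneg_nonneg) auto
  ultimately show False using r2 assms(5) by (simp add: algebra_simps power2_eq_square)
qed

lemma sq_le_of_sq_le_linear:
  fixes N B \<delta> \<epsilon> :: real
  assumes "N\<^sup>2 \<le> 2 * (B + \<delta>) * N + \<epsilon>"
  shows "N\<^sup>2 \<le> 10 * B\<^sup>2 + 20/3 * \<delta>\<^sup>2 + 2 * \<epsilon>"
proof -
  have "0 \<le> (N - 2 * (B + \<delta>))\<^sup>2" "0 \<le> (3 * B - 2 * \<delta>)\<^sup>2" by simp_all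
  with assms show ?thesis by (simp add: power2_eq_square algebra_simps)
qed

lemma residual_comparison:
  fixes a b \<xi> :: "nat \<Rightarrow> real" and \<delta> \<epsilon> :: real
  assumes fit: "(norm2 n (\<lambda>i. a i - \<xi> i))\<^sup>2 \<le> (norm2 n (\<lambda>i. b i - \<xi> i))\<^sup>2 + \<epsilon>"
    and noise: "dotp n \<xi> (\<lambda>i. a i - b i) \<le> \<delta> * norm2 n (\<lambda>i. a i - b i)"
    and \<delta>: "0 \<le> \<delta>" and \<epsilon>: "0 \<le> \<epsilon>"
  shows "norm2 n a \<le> norm2 n b + 2 * sqrt (\<delta>\<^sup>2 + \<epsilon>)"
    and "(norm2 n (\<lambda>i. a i - b i))\<^sup>2 \<le> 10 * (norm2 n b)\<^sup>2 + 20/3 * \<delta>\<^sup>2 + 2 * \<epsilon>"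
proof -
  define A B N where "A = norm2 n a" "B = norm2 n b" "N = norm2 n (\<lambda>i. a i - b i)"
  have A0: "0 \<le> A" and B0: "0 \<le> B"
    by (simp_all add: A_B_N_def norm2_nonneg)
  have A_sq: "A\<^sup>2 \<le> B\<^sup>2 + 2 * \<delta> * N + \<epsilon>"
    using fit noise
    by (simp add: A_B_N_def norm2_power2 dotp_diff_self dotp_diff_right dotp_commute)
  have "N \<le> A + B" unfolding A_B_N_def by (rule norm2_diff_le)
  with \<delta> A_sq have "A\<^sup>2 \<le> B\<^sup>2 + 2 * \<delta> * (A + B) + \<epsilon>"
    by (smt (verit, best) mult_left_mono)
  then show "norm2 n a \<le> norm2 n b + 2 * sqrt (\<delta>\<^sup>2 + \<epsilon>)"
    using le_add_twice_sqrt_of_sq_le A0 B0 \<delta> \<epsilon> by (simp add: A_B_N_def)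
  have "- dotp n b (\<lambda>i. a i - b i) \<le> B * N"
    using dotp_le_norm2_mult[of n "\<lambda>i. - b i" "\<lambda>i. a i - b i"]
    by (simp add: A_B_N_def dotp_def norm2_def sum_negf)
  then have "N\<^sup>2 \<le> 2 * (B + \<delta>) * N + \<epsilon>"
    using A_sq
    by (simp add: A_B_N_def norm2_power2 dotp_diff_self dotp_diff_right dotp_commute algebra_simps)
  then show "(norm2 n (\<lambda>i. a i - b i))\<^sup>2 \<le> 10 * (norm2 n b)\<^sup>2 + 20/3 * \<delta>\<^sup>2 + 2 * \<epsilon>"
    unfolding A_B_N_def by (rule sq_le_of_sq_le_linear)
qed

section \<open>Gaussian integrals\<close>

abbreviation std_normal :: "real measure" where
  "std_normal \<equiv> density lborel (\<lambda>x. ennreal (std_normal_density x))"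

lemma nn_integral_std_normal_gaussian_factor:
  assumes factor: "\<And>x. std_normal_density x * f x = k * normal_density \<mu> \<sigma> x" and "0 \<le> k"
    and [measurable]: "f \<in> borel_measurable borel" and "0 < \<sigma>"
  shows "(\<integral>\<^sup>+x. ennreal (f x) \<partial>std_normal) = ennreal k"
proof -
  have f_nonneg: "0 \<le> f x" for x
  proof -
    have "0 \<le> std_normal_density x * f x"
      using factor[of x] \<open>0 \<le> k\<close> by simp
    then show ?thesis using normal_density_pos[of 1 0 x] by (simp add: zero_le_mult_iff)
  qed
  have "(\<integral>\<^sup>+x. ennreal (f x) \<partial>std_normal)
      = (\<integral>\<^sup>+x. ennreal k * ennreal (normal_density \<mu> \<sigma> x) \<partial>lborel)"
    by (subst nn_integral_density)
       (auto intro!: nn_integral_cong simp: ennreal_mult[symmetric] factor f_nonneg \<open>0 \<le> k\<close>)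
  also have "\<dots> = ennreal k"
    using \<open>0 < \<sigma>\<close> integrable_normal_density[of \<sigma> \<mu>] integral_normal_density[of \<sigma> \<mu>]
    by (simp add: nn_integral_cmult nn_integral_eq_integral)
  finally show ?thesis .
qed

lemma nn_integral_std_normal_exp_linear:
  "(\<integral>\<^sup>+x. ennreal (exp (c * x)) \<partial>std_normal) = ennreal (exp (c\<^sup>2 / 2))"
proof (rule nn_integral_std_normal_gaussian_factor)
  fix x
  have "- x\<^sup>2 / 2 + c * x = c\<^sup>2/2 + (-(x - c)\<^sup>2 / 2)"
    by (simp add: power2_eq_square field_simps)
  hence "exp (- x\<^sup>2 / 2) * exp (c * x) = exp (c\<^sup>2/2) * exp (-(x - c)\<^sup>2 / 2)"
    unfolding exp_add[symmetric] by metis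
  thus "std_normal_density x * exp (c * x) = exp (c\<^sup>2 / 2) * normal_density c 1 x"
    by (simp add: normal_density_def)
qed simp_all

lemma nn_integral_std_normal_exp_quadratic:
  "(\<integral>\<^sup>+x. ennreal (exp (a * x + x\<^sup>2 / 4)) \<partial>std_normal) = ennreal (sqrt 2 * exp (a\<^sup>2))"
proof (rule nn_integral_std_normal_gaussian_factor)
  fix x
  have "- x\<^sup>2 / 2 + (a * x + x\<^sup>2 / 4) = a\<^sup>2 + (-(x - 2*a)\<^sup>2 / 4)"
    by (simp add: power2_eq_square field_simps)
  hence "exp (- x\<^sup>2 / 2) * exp (a * x + x\<^sup>2 / 4) = exp (a\<^sup>2) * exp (-(x - 2*a)\<^sup>2 / 4)"
    unfolding exp_add[symmetric] by metis
  moreover have "sqrt (2 * pi * (sqrt 2)\<^sup>2) = sqrt 2 * sqrt (2 * pi)"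
    by (simp add: real_sqrt_mult[symmetric])
  ultimately show "std_normal_density x * exp (a * x + x\<^sup>2 / 4)
      = sqrt 2 * exp (a\<^sup>2) * normal_density (2*a) (sqrt 2) x"
    by (simp add: normal_density_def field_simps)
qed simp_all

lemma nn_integral_std_normal_exp_linearization:
  "ennreal (exp (a + c\<^sup>2 / 2 * z\<^sup>2)) = (\<integral>\<^sup>+g. ennreal (exp (a + c * z * g)) \<partial>std_normal)"
proof -
  have "(\<integral>\<^sup>+g. ennreal (exp (a + c * z * g)) \<partial>std_normal)
      = (\<integral>\<^sup>+g. ennreal (exp a) * ennreal (exp ((c * z) * g)) \<partial>std_normal)"
    by (intro nn_integral_cong) (simp add: exp_add ennreal_mult)
  also have "\<dots> = ennreal (exp a) * ennreal (exp ((c * z)\<^sup>2 / 2))"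
    by (subst nn_integral_cmult) (auto simp: nn_integral_std_normal_exp_linear)
  finally show ?thesis
    by (simp add: ennreal_mult[symmetric] exp_add[symmetric] power_mult_distrib)
qed

section \<open>Projections of sub-Gaussian noise\<close>

lemma borel_measurable_dotp_centered [measurable]:
  assumes "\<And>i. i < n \<Longrightarrow> Y i \<in> borel_measurable M"
  shows "(\<lambda>\<omega>. dotp n (\<lambda>i. Y i \<omega> - m i) w) \<in> borel_measurable M"
  unfolding dotp_def using assms by measurable

locale subgaussian_vector = prob_space M for M :: "'a measure" +
  fixes n :: nat and Y :: "nat \<Rightarrow> 'a \<Rightarrow> real" and m :: "nat \<Rightarrow> real" and s :: real
  assumes indep: "indep_vars (\<lambda>_. borel) Y {..<n}"
    and s_pos: "0 < s"
    and mgf: "\<And>i t. i < n \<Longrightarrow>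
      (\<integral>\<^sup>+\<omega>. ennreal (exp (t * (Y i \<omega> - m i))) \<partial>M) \<le> ennreal (exp (s\<^sup>2 * t\<^sup>2 / 2))"
begin

definition noise :: "'a \<Rightarrow> nat \<Rightarrow> real" where
  "noise \<omega> = (\<lambda>i. Y i \<omega> - m i)"

lemma borel_measurable_dotp_noise [measurable]: "(\<lambda>\<omega>. dotp n (noise \<omega>) w) \<in> borel_measurable M"
  unfolding noise_def using indep by (intro borel_measurable_dotp_centered) (auto simp: indep_vars_def)

lemma nn_integral_exp_dotp_noise_le:
  "(\<integral>\<^sup>+\<omega>. ennreal (exp (dotp n (noise \<omega>) w)) \<partial>M) \<le> ennreal (exp (s\<^sup>2 / 2 * dotp n w w))"
proof -
  have "(\<integral>\<^sup>+\<omega>. ennreal (exp (dotp n (noise \<omega>) w)) \<partial>M)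
      = (\<integral>\<^sup>+\<omega>. (\<Prod>i\<in>{..<n}. ennreal (exp (w i * (Y i \<omega> - m i)))) \<partial>M)"
    by (intro nn_integral_cong) (simp add: dotp_def noise_def exp_sum prod_ennreal mult.commute)
  also have "\<dots> = (\<Prod>i\<in>{..<n}. \<integral>\<^sup>+\<omega>. ennreal (exp (w i * (Y i \<omega> - m i))) \<partial>M)"
    by (intro indep_vars_nn_integral indep_vars_compose2[OF indep]) auto
  also have "\<dots> \<le> (\<Prod>i\<in>{..<n}. ennreal (exp (s\<^sup>2 * (w i)\<^sup>2 / 2)))"
    by (intro prod_mono_ennreal mgf) auto
  also have "\<dots> = ennreal (exp (s\<^sup>2 / 2 * dotp n w w))"
    by (simp add: prod_ennreal exp_sum[symmetric] dotp_def sum_distrib_left power2_eq_square mult_ac)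
  finally show ?thesis .
qed

lemma nn_integral_exp_projection_shift:
  assumes on: "orthonormal n e (Suc d)"
    and IH: "\<And>w. (\<integral>\<^sup>+\<omega>. ennreal (exp (dotp n (noise \<omega>) w
              + k * (\<Sum>j<d. (dotp n (noise \<omega>) (e j))\<^sup>2))) \<partial>M)
     \<le> ennreal (sqrt 2 ^ d * exp (s\<^sup>2/2 * (dotp n w w + (\<Sum>j<d. (dotp n w (e j))\<^sup>2))))"
  shows "(\<integral>\<^sup>+\<omega>. ennreal (exp (dotp n (noise \<omega>) w + a * dotp n (noise \<omega>) (e d)
              + k * (\<Sum>j<d. (dotp n (noise \<omega>) (e j))\<^sup>2))) \<partial>M)
     \<le> ennreal (sqrt 2 ^ d * exp (s\<^sup>2/2 * (dotp n w w + (\<Sum>j<d. (dotp n w (e j))\<^sup>2)))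
          * exp (s\<^sup>2 * a * dotp n w (e d) + s\<^sup>2 * a\<^sup>2 / 2))"
proof -
  define w' where "w' = (\<lambda>i. w i + a * e d i)"
  have ed: "dotp n (e d) (e d) = 1" "\<And>j. j < d \<Longrightarrow> dotp n (e d) (e j) = 0"
    using on by (auto simp: orthonormal_def)
  have "(\<integral>\<^sup>+\<omega>. ennreal (exp (dotp n (noise \<omega>) w + a * dotp n (noise \<omega>) (e d)
              + k * (\<Sum>j<d. (dotp n (noise \<omega>) (e j))\<^sup>2))) \<partial>M)
      = (\<integral>\<^sup>+\<omega>. ennreal (exp (dotp n (noise \<omega>) w' + k * (\<Sum>j<d. (dotp n (noise \<omega>) (e j))\<^sup>2))) \<partial>M)"
    by (simp add: w'_def dotp_add_scaled_right)
  also have "\<dots> \<le> ennreal (sqrt 2 ^ d * exp (s\<^sup>2/2 * (dotp n w' w' + (\<Sum>j<d. (dotp n w' (e j))\<^sup>2))))"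
    by (rule IH)
  also have "dotp n w' w' = dotp n w w + 2 * a * dotp n w (e d) + a\<^sup>2"
    unfolding w'_def dotp_add_scaled_left dotp_add_scaled_right using ed
    by (simp add: dotp_commute[of n "e d" w] power2_eq_square algebra_simps)
  also have "(\<Sum>j<d. (dotp n w' (e j))\<^sup>2) = (\<Sum>j<d. (dotp n w (e j))\<^sup>2)"
    unfolding w'_def dotp_add_scaled_left using ed by simp
  finally show ?thesis
    by (simp add: mult.assoc mult_exp_exp algebra_simps)
qed

text \<open>Induction on d: the new square is linearised by an independent standard Gaussian g,
  exp (Z^2 / (4 s^2)) = E_g exp (c Z g) with c = 1 / (s sqrt 2); after Fubini, c g e_d is a
  shift of the linear form w, and the Gaussian integral over g costs the factor sqrt 2.\<close>

lemma nn_integral_exp_projection_le: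
  assumes "orthonormal n e d"
  shows "(\<integral>\<^sup>+\<omega>. ennreal (exp (dotp n (noise \<omega>) w
              + 1 / (4 * s\<^sup>2) * (\<Sum>j<d. (dotp n (noise \<omega>) (e j))\<^sup>2))) \<partial>M)
     \<le> ennreal (sqrt 2 ^ d * exp (s\<^sup>2/2 * (dotp n w w + (\<Sum>j<d. (dotp n w (e j))\<^sup>2))))"
  using assms
proof (induction d arbitrary: w)
  case 0
  then show ?case using nn_integral_exp_dotp_noise_le[of w] by simp
next
  case (Suc d)
  define c where "c = 1 / (s * sqrt 2)"
  have s2c2: "s\<^sup>2 * c\<^sup>2 = 1/2" using s_pos by (simp add: c_def power2_eq_square field_simps)
  have c2: "c\<^sup>2 / 2 = 1 / (4 * s\<^sup>2)" using s_pos by (simp add: c_def power2_eq_square field_simps)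
  define B where "B = sqrt 2 ^ d * exp (s\<^sup>2/2 * (dotp n w w + (\<Sum>j<d. (dotp n w (e j))\<^sup>2)))"
  define A where "A \<omega> = dotp n (noise \<omega>) w + 1 / (4 * s\<^sup>2) * (\<Sum>j<d. (dotp n (noise \<omega>) (e j))\<^sup>2)"
    for \<omega>
  define Z where "Z \<omega> = dotp n (noise \<omega>) (e d)" for \<omega>
  have [measurable]: "A \<in> borel_measurable M" "Z \<in> borel_measurable M"
    unfolding A_def Z_def by measurable
  interpret P: pair_sigma_finite M std_normal
    by (intro pair_sigma_finite.intro prob_space_imp_sigma_finite prob_space_normal_density)
      (auto intro: prob_space_axioms)
  have shifted: "(\<integral>\<^sup>+\<omega>. ennreal (exp (A \<omega> + c * Z \<omega> * g)) \<partial>M)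
      \<le> ennreal (B * exp (s\<^sup>2 * c * dotp n w (e d) * g + g\<^sup>2 / 4))" for g
  proof -
    have "s\<^sup>2 * (c * g)\<^sup>2 / 2 = (s\<^sup>2 * c\<^sup>2) * g\<^sup>2 / 2" by (simp add: power_mult_distrib)
    also have "\<dots> = g\<^sup>2 / 4" by (simp add: s2c2)
    finally have sq: "s\<^sup>2 * (c * g)\<^sup>2 / 2 = g\<^sup>2 / 4" .
    show ?thesis
      using nn_integral_exp_projection_shift[OF Suc.prems Suc.IH[OF orthonormal_Suc_D[OF Suc.prems]],
          of w "c * g", unfolded sq]
      by (simp add: A_def Z_def B_def algebra_simps)
  qed
  have "(\<integral>\<^sup>+\<omega>. ennreal (exp (dotp n (noise \<omega>) w
              + 1 / (4 * s\<^sup>2) * (\<Sum>j<Suc d. (dotp n (noise \<omega>) (e j))\<^sup>2))) \<partial>M)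
      = (\<integral>\<^sup>+\<omega>. (\<integral>\<^sup>+g. ennreal (exp (A \<omega> + c * Z \<omega> * g)) \<partial>std_normal) \<partial>M)"
  proof (intro nn_integral_cong)
    fix \<omega>
    have "dotp n (noise \<omega>) w + 1 / (4 * s\<^sup>2) * (\<Sum>j<Suc d. (dotp n (noise \<omega>) (e j))\<^sup>2)
        = A \<omega> + c\<^sup>2 / 2 * (Z \<omega>)\<^sup>2"
      by (simp add: A_def Z_def c2 algebra_simps)
    then show "ennreal (exp (dotp n (noise \<omega>) w + 1 / (4 * s\<^sup>2) * (\<Sum>j<Suc d. (dotp n (noise \<omega>) (e j))\<^sup>2)))
        = (\<integral>\<^sup>+g. ennreal (exp (A \<omega> + c * Z \<omega> * g)) \<partial>std_normal)"
      by (simp only: nn_integral_std_normal_exp_linearization)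
  qed
  also have "\<dots> = (\<integral>\<^sup>+g. (\<integral>\<^sup>+\<omega>. ennreal (exp (A \<omega> + c * Z \<omega> * g)) \<partial>M) \<partial>std_normal)"
    by (rule P.Fubini'[symmetric]) measurable
  also have "\<dots> \<le> (\<integral>\<^sup>+g. ennreal B * ennreal (exp (s\<^sup>2 * c * dotp n w (e d) * g + g\<^sup>2 / 4)) \<partial>std_normal)"
    using shifted by (intro nn_integral_mono) (simp add: B_def ennreal_mult)
  also have "\<dots> = ennreal B * ennreal (sqrt 2 * exp ((s\<^sup>2 * c * dotp n w (e d))\<^sup>2))"
    by (simp add: nn_integral_cmult nn_integral_std_normal_exp_quadratic)
  also have "(s\<^sup>2 * c * dotp n w (e d))\<^sup>2 = s\<^sup>2 / 2 * (dotp n w (e d))\<^sup>2"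
    using s2c2 by (simp add: power_mult_distrib power2_eq_square algebra_simps)
  also have "ennreal B * ennreal (sqrt 2 * exp (s\<^sup>2 / 2 * (dotp n w (e d))\<^sup>2))
      = ennreal (sqrt 2 ^ Suc d * exp (s\<^sup>2/2 * (dotp n w w + (\<Sum>j<Suc d. (dotp n w (e j))\<^sup>2))))"
    by (simp add: B_def ennreal_mult[symmetric] mult_exp_exp distrib_left add.assoc mult_ac)
  finally show ?case .
qed

lemma measure_projection_ge_le:
  assumes "orthonormal n e d"
  shows "measure M {\<omega>\<in>space M. t \<le> (\<Sum>j<d. (dotp n (noise \<omega>) (e j))\<^sup>2)}
    \<le> sqrt 2 ^ d * exp (- t / (4 * s\<^sup>2))"
proof -
  define S where "S \<omega> = (\<Sum>j<d. (dotp n (noise \<omega>) (e j))\<^sup>2)" for \<omega>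
  have [measurable]: "S \<in> borel_measurable M" unfolding S_def by measurable
  have "emeasure M {\<omega>\<in>space M. t \<le> S \<omega>}
      \<le> ennreal (exp (- (1 / (4 * s\<^sup>2)) * t))
         * (\<integral>\<^sup>+\<omega>. ennreal (exp (1 / (4 * s\<^sup>2) * S \<omega>)) * indicator (space M) \<omega> \<partial>M)"
    using s_pos by (intro Chernoff_ineq_nn_integral_ge) auto
  also have "(\<integral>\<^sup>+\<omega>. ennreal (exp (1 / (4 * s\<^sup>2) * S \<omega>)) * indicator (space M) \<omega> \<partial>M)
      = (\<integral>\<^sup>+\<omega>. ennreal (exp (dotp n (noise \<omega>) (\<lambda>_. 0) + 1 / (4 * s\<^sup>2) * S \<omega>)) \<partial>M)"
    by (intro nn_integral_cong) (simp add: dotp_def)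
  also have "ennreal (exp (- (1 / (4 * s\<^sup>2)) * t)) * \<dots>
      \<le> ennreal (exp (- (1 / (4 * s\<^sup>2)) * t)) * ennreal (sqrt 2 ^ d)"
    using nn_integral_exp_projection_le[OF assms, of "\<lambda>_. 0"]
    by (intro mult_left_mono) (simp_all add: S_def dotp_def)
  also have "ennreal (exp (- (1 / (4 * s\<^sup>2)) * t)) * ennreal (sqrt 2 ^ d)
      = ennreal (sqrt 2 ^ d * exp (- t / (4 * s\<^sup>2)))"
    by (simp add: ennreal_mult[symmetric] mult.commute)
  finally show ?thesis
    by (simp add: S_def emeasure_eq_measure ennreal_le_iff)
qed

end

lemma subgaussian_vectorI:
  fixes M :: "'a measure"
  assumes M: "prob_space M"
    and indep: "prob_space.indep_vars M (\<lambda>_. borel) Y {..<n}"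
    and subg_int: "\<And>i t. i < n \<Longrightarrow> integrable M (\<lambda>\<omega>. exp (t * (Y i \<omega> - integral\<^sup>L M (Y i))))"
    and subg: "\<And>i t. i < n \<Longrightarrow>
          integral\<^sup>L M (\<lambda>\<omega>. exp (t * (Y i \<omega> - integral\<^sup>L M (Y i)))) \<le> exp (\<sigma>\<^sup>2 * t\<^sup>2 / 2)"
    and \<sigma>: "0 \<le> \<sigma>" "\<sigma> \<le> s" "0 < s"
  shows "subgaussian_vector M n Y (\<lambda>i. integral\<^sup>L M (Y i)) s"
proof (intro subgaussian_vector.intro subgaussian_vector_axioms.intro M indep \<sigma>(3))
  fix i t assume i: "i < n"
  have "(\<integral>\<^sup>+\<omega>. ennreal (exp (t * (Y i \<omega> - integral\<^sup>L M (Y i)))) \<partial>M)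
      = ennreal (integral\<^sup>L M (\<lambda>\<omega>. exp (t * (Y i \<omega> - integral\<^sup>L M (Y i)))))"
    using subg_int[OF i] by (intro nn_integral_eq_integral) auto
  also have "\<dots> \<le> ennreal (exp (s\<^sup>2 * t\<^sup>2 / 2))"
    using power_mono[OF \<sigma>(2,1), of 2]
    by (intro ennreal_leI order.trans[OF subg[OF i]]) (auto intro!: divide_right_mono mult_right_mono)
  finally show "(\<integral>\<^sup>+\<omega>. ennreal (exp (t * (Y i \<omega> - integral\<^sup>L M (Y i)))) \<partial>M)
      \<le> ennreal (exp (s\<^sup>2 * t\<^sup>2 / 2))" .
qed

definition noise_projection_sq ::
    "'a measure \<Rightarrow> nat \<Rightarrow> (nat \<Rightarrow> 'a \<Rightarrow> real) \<Rightarrow> (nat \<Rightarrow> nat \<Rightarrow> real) \<Rightarrow> nat \<Rightarrow> 'a \<Rightarrow> real" where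
  "noise_projection_sq M n Y e d \<omega> = (\<Sum>j<d. (dotp n (\<lambda>i. Y i \<omega> - integral\<^sup>L M (Y i)) (e j))\<^sup>2)"

context
  fixes M :: "'a measure" and n :: nat and Y :: "nat \<Rightarrow> 'a \<Rightarrow> real" and \<sigma> :: real
    and e :: "nat \<Rightarrow> nat \<Rightarrow> real" and d :: nat
  assumes M: "prob_space M"
    and indep: "prob_space.indep_vars M (\<lambda>_. borel) Y {..<n}"
    and subg_int: "\<And>i t. i < n \<Longrightarrow> integrable M (\<lambda>\<omega>. exp (t * (Y i \<omega> - integral\<^sup>L M (Y i))))"
    and subg: "\<And>i t. i < n \<Longrightarrow>
          integral\<^sup>L M (\<lambda>\<omega>. exp (t * (Y i \<omega> - integral\<^sup>L M (Y i)))) \<le> exp (\<sigma>\<^sup>2 * t\<^sup>2 / 2)"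
    and on: "orthonormal n e d"
begin

abbreviation "proj_sq \<equiv> noise_projection_sq M n Y e d"

lemma borel_measurable_noise_projection_sq [measurable]: "proj_sq \<in> borel_measurable M"
  unfolding noise_projection_sq_def
  by (intro borel_measurable_sum borel_measurable_power borel_measurable_dotp_centered)
    (use indep M in \<open>auto simp: prob_space.indep_vars_def\<close>)

lemma measure_noise_projection_sq_ge_le:
  assumes "\<sigma> \<le> s" "0 < s" "0 \<le> \<sigma>"
  shows "measure M {\<omega>\<in>space M. r \<le> proj_sq \<omega>} \<le> sqrt 2 ^ d * exp (- r / (4 * s\<^sup>2))"
proof -
  interpret subgaussian_vector M n Y "\<lambda>i. integral\<^sup>L M (Y i)" s
    by (rule subgaussian_vectorI[OF M indep subg_int subg]) (use assms in auto)
  show ?thesis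
    using measure_projection_ge_le[OF on, of r] by (simp add: noise_projection_sq_def noise_def)
qed

lemma measure_noise_projection_sq_gt_le:
  assumes "0 < \<sigma>"
  shows "measure M {\<omega>\<in>space M. \<sigma>\<^sup>2 * t < proj_sq \<omega>} \<le> sqrt 2 ^ d * exp (- t / 4)"
proof -
  interpret prob_space M by (rule M)
  have "measure M {\<omega>\<in>space M. \<sigma>\<^sup>2 * t < proj_sq \<omega>}
      \<le> measure M {\<omega>\<in>space M. \<sigma>\<^sup>2 * t \<le> proj_sq \<omega>}"
    by (intro finite_measure_mono) auto
  also have "\<dots> \<le> sqrt 2 ^ d * exp (- (\<sigma>\<^sup>2 * t) / (4 * \<sigma>\<^sup>2))"
    using assms by (intro measure_noise_projection_sq_ge_le) auto
  finally show ?thesis using assms by simp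
qed

text \<open>For \<sigma> = 0 the hypothesis holds at every scale s > 0; letting s tend to 0 kills every
  tail of the projection.\<close>

lemma measure_noise_projection_sq_pos_eq_0:
  assumes "\<sigma> = 0"
  shows "measure M {\<omega>\<in>space M. 0 < proj_sq \<omega>} = 0"
proof -
  interpret prob_space M by (rule M)
  have null: "{\<omega>\<in>space M. r \<le> proj_sq \<omega>} \<in> null_sets M" if r: "0 < r" for r
  proof -
    have "measure M {\<omega>\<in>space M. r \<le> proj_sq \<omega>} \<le> sqrt 2 ^ d * exp (- K)" if "0 < K" for K
    proof -
      have "measure M {\<omega>\<in>space M. r \<le> proj_sq \<omega>}
          \<le> sqrt 2 ^ d * exp (- r / (4 * (sqrt (r / (4 * K)))\<^sup>2))"
        using r that assms by (intro measure_noise_projection_sq_ge_le) auto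
      also have "- r / (4 * (sqrt (r / (4 * K)))\<^sup>2) = - K" using r that by simp
      finally show ?thesis .
    qed
    then have "measure M {\<omega>\<in>space M. r \<le> proj_sq \<omega>} \<le> 0"
      by (intro tendsto_lowerbound[of "\<lambda>K. sqrt 2 ^ d * exp (- K)" _ at_top]
          tendsto_mult_right_zero filterlim_compose[OF exp_at_bot filterlim_uminus_at_bot_at_top])
        (auto simp: eventually_at_top_dense)
    then show ?thesis by (auto simp: null_sets_def emeasure_eq_measure intro: antisym)
  qed
  have "{\<omega>\<in>space M. 0 < proj_sq \<omega>} = (\<Union>k::nat. {\<omega>\<in>space M. 1 / Suc k \<le> proj_sq \<omega>})"
  proof (intro equalityI subsetI)
    fix \<omega> assume "\<omega> \<in> {\<omega>\<in>space M. 0 < proj_sq \<omega>}"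
    then show "\<omega> \<in> (\<Union>k::nat. {\<omega>\<in>space M. 1 / Suc k \<le> proj_sq \<omega>})"
      by (auto dest!: reals_Archimedean simp: inverse_eq_divide) (meson less_imp_le)
  next
    fix \<omega> assume "\<omega> \<in> (\<Union>k::nat. {\<omega>\<in>space M. 1 / Suc k \<le> proj_sq \<omega>})"
    then show "\<omega> \<in> {\<omega>\<in>space M. 0 < proj_sq \<omega>}"
      by (auto intro: less_le_trans[rotated])
  qed
  also have "\<dots> \<in> null_sets M" by (intro null_sets_UN null) auto
  finally show ?thesis by (simp add: measure_eq_0_null_sets)
qed

end

section \<open>Coding lengths and the good event\<close>

lemma cl_nonneg: "is_coding_length p cl \<Longrightarrow> F \<subseteq> {..<p} \<Longrightarrow> 0 \<le> cl F"
  by (auto simp: is_coding_length_def)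

lemma cl_weight_nonneg: "0 \<le> cl_weight e"
  by (simp add: cl_weight_def)

lemma sum_cl_weight_le_2:
  assumes "is_coding_length p cl"
  shows "(\<Sum>F\<in>Pow {..<p}. cl_weight (cl F)) \<le> 2"
proof -
  let ?W = "\<lambda>F. cl_weight (cl F)" and ?N = "{F. F \<subseteq> {..<p} \<and> F \<noteq> {}}"
  have fin: "finite ?N" by (rule finite_subset[of _ "Pow {..<p}"]) auto
  have "Pow {..<p} = insert {} ?N" by auto
  then have "sum ?W (Pow {..<p}) = ?W {} + sum ?W ?N"
    using sum.insert[OF fin, of "{}" ?W] by simp
  also have "\<dots> \<le> 1 + 1"
    using assms by (intro add_mono) (auto simp: is_coding_length_def cl_weight_def)
  finally show ?thesis by simp
qed

lemma cc_vec_attained: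
  "\<exists>F. F \<subseteq> {..<p} \<and> supp p \<beta> \<subseteq> F \<and> cc_vec p cl \<beta> = cc_set cl F"
proof -
  define C where "C = {cc_set cl F | F. F \<subseteq> {..<p} \<and> supp p \<beta> \<subseteq> F}"
  have "C = cc_set cl ` {F. F \<subseteq> {..<p} \<and> supp p \<beta> \<subseteq> F}" by (auto simp: C_def)
  then have "finite C" by simp
  moreover have "C \<noteq> {}" unfolding C_def by (auto simp: supp_def)
  ultimately have "Inf C \<in> C" by (simp add: cInf_eq_Min)
  then show ?thesis by (auto simp: C_def cc_vec_def)
qed

lemma rho_minus_mult_le:
  assumes "G \<subseteq> {..<p}" "cc_set cl G \<le> s" "supp p \<Delta> \<subseteq> G"
  shows "ereal (real n) * rho_minus n p X cl s * ereal ((norm2 p \<Delta>)\<^sup>2)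
    \<le> ereal ((norm2 n (matvec p X \<Delta>))\<^sup>2)"
proof (cases "\<exists>j<p. \<Delta> j \<noteq> 0")
  case False
  then show ?thesis by (simp add: norm2_def zero_ereal_def[symmetric])
next
  case True
  define R where "R = (1 / real n) * (norm2 n (matvec p X \<Delta>))\<^sup>2 / (norm2 p \<Delta>)\<^sup>2"
  have "rho_minus n p X cl s \<le> rho_minus_set n p X G"
    unfolding rho_minus_def using assms by (intro Inf_lower) blast
  also have "\<dots> \<le> ereal R"
    unfolding rho_minus_set_def R_def using assms True by (intro Inf_lower) blast
  finally have rho: "rho_minus n p X cl s \<le> ereal R" .
  from True obtain j where "j < p" "\<Delta> j \<noteq> 0" by blast
  then have pos: "0 < (norm2 p \<Delta>)\<^sup>2"
    by (simp add: norm2_def sum_nonneg sum_pos2[of _ j])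
  have "ereal (real n) * rho_minus n p X cl s * ereal ((norm2 p \<Delta>)\<^sup>2)
      \<le> ereal (real n) * ereal R * ereal ((norm2 p \<Delta>)\<^sup>2)"
    by (intro ereal_mult_right_mono ereal_mult_left_mono rho) (use pos in auto)
  also have "\<dots> = ereal (real n * R * (norm2 p \<Delta>)\<^sup>2)" by simp
  also have "real n * R * (norm2 p \<Delta>)\<^sup>2 \<le> (norm2 n (matvec p X \<Delta>))\<^sup>2"
    using pos by (cases "n = 0") (simp_all add: R_def)
  finally show ?thesis by simp
qed

lemma rho_minus_cc_vec_mult_le:
  assumes "subadditive_cc p cl"
  shows "ereal (real n) * rho_minus n p X cl (cc_vec p cl \<beta> + cc_vec p cl \<gamma>)
      * ereal ((norm2 p (\<lambda>j. \<beta> j - \<gamma> j))\<^sup>2)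
    \<le> ereal ((norm2 n (matvec p X (\<lambda>j. \<beta> j - \<gamma> j)))\<^sup>2)"
proof -
  obtain F where F: "F \<subseteq> {..<p}" "supp p \<beta> \<subseteq> F" "cc_vec p cl \<beta> = cc_set cl F"
    using cc_vec_attained by blast
  obtain G where G: "G \<subseteq> {..<p}" "supp p \<gamma> \<subseteq> G" "cc_vec p cl \<gamma> = cc_set cl G"
    using cc_vec_attained by blast
  have "cc_set cl (F \<union> G) \<le> cc_vec p cl \<beta> + cc_vec p cl \<gamma>"
    using assms F(1,3) G(1,3) by (simp add: subadditive_cc_def)
  moreover have "supp p (\<lambda>j. \<beta> j - \<gamma> j) \<subseteq> F \<union> G"
    using F(2) G(2) by (auto simp: supp_def subset_iff)
  ultimately show ?thesis
    using F(1) G(1) by (intro rho_minus_mult_le) auto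
qed

lemma sqrt2_power_exp_le:
  fixes k D :: nat and r \<eta> :: real
  assumes "D \<le> k + 1" "0 \<le> r" "0 < \<eta>" "\<eta> \<le> 6"
  shows "sqrt 2 ^ D * exp (- (11/2 * (real k + r) + 43/10 * ln (6 / \<eta>)) / 4) \<le> \<eta> / 3 * 2 powr (- r)"
proof -
  define L where "L = ln (6 / \<eta>)"
  have ln2: "ln 2 < (1::real)" by (rule ln_2_less_1)
  have s1: "sqrt 2 ^ D \<le> sqrt 2 * sqrt 2 ^ k"
    using power_increasing[OF assms(1), of "sqrt 2"] by simp
  have "sqrt 2 ^ k = exp (real k * ln (sqrt 2))"
    by (subst exp_of_nat_mult) simp
  also have "\<dots> = exp (real k * (ln 2 / 2))"
    by (simp add: ln_sqrt)
  also have "\<dots> \<le> exp (11/8 * real k)"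
    using ln2 mult_left_mono[of "ln 2" 1 "real k"] by simp
  finally have s2: "sqrt 2 ^ k \<le> exp (11/8 * real k)" .
  have s3: "exp (- (11/8) * r) \<le> 2 powr (- r)"
    using ln2 assms(2) mult_left_mono[of "ln 2" 1 r] by (simp add: powr_def)
  have "exp (- (43/40) * L) \<le> exp (- L)"
    using assms(3,4) by (simp add: L_def)
  also have "\<dots> = \<eta> / 6"
    using assms(3) by (simp add: L_def exp_minus)
  finally have s4: "exp (- (43/40) * L) \<le> \<eta> / 6" .
  have eq: "exp (- (11/2 * (real k + r) + 43/10 * L) / 4)
      = exp (- (11/8) * real k) * exp (- (11/8) * r) * exp (- (43/40) * L)"
    by (simp add: exp_add[symmetric] field_simps)
  have "sqrt 2 ^ D * exp (- (11/2 * (real k + r) + 43/10 * L) / 4)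
      \<le> (sqrt 2 * exp (11/8 * real k)) * (exp (- (11/8) * real k) * exp (- (11/8) * r) * exp (- (43/40) * L))"
    unfolding eq by (intro mult_right_mono order.trans[OF s1] mult_left_mono s2) auto
  also have "\<dots> = sqrt 2 * (exp (- (11/8) * r) * exp (- (43/40) * L))"
    by (simp add: exp_add[symmetric] mult_ac)
  also have "\<dots> \<le> 2 * (2 powr (- r) * (\<eta> / 6))"
    using s3 s4 by (intro mult_mono) (auto simp: real_sqrt_le_iff[of 2 4, simplified])
  finally show ?thesis by (simp add: L_def)
qed

lemma measure_noise_projection_sq_gt_le_weight:
  fixes M :: "'a measure" and c :: ereal
  assumes M: "prob_space M"
    and indep: "prob_space.indep_vars M (\<lambda>_. borel) Y {..<n}"
    and subg_int: "\<And>i t. i < n \<Longrightarrow> integrable M (\<lambda>\<omega>. exp (t * (Y i \<omega> - integral\<^sup>L M (Y i))))"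
    and subg: "\<And>i t. i < n \<Longrightarrow>
          integral\<^sup>L M (\<lambda>\<omega>. exp (t * (Y i \<omega> - integral\<^sup>L M (Y i)))) \<le> exp (\<sigma>\<^sup>2 * t\<^sup>2 / 2)"
    and \<sigma>: "0 \<le> \<sigma>" and on: "orthonormal n e d" and d: "d \<le> k + 1"
    and c: "0 \<le> c" "\<sigma> = 0 \<or> c \<noteq> \<infinity>" and \<eta>: "0 < \<eta>" "\<eta> \<le> 6"
  shows "measure M {\<omega>\<in>space M. \<sigma>\<^sup>2 * (11/2 * (real k + real_of_ereal c) + 43/10 * ln (6 / \<eta>))
                                 < noise_projection_sq M n Y e d \<omega>}
    \<le> \<eta> / 3 * cl_weight c"
proof (cases "\<sigma> = 0")
  case True
  then show ?thesis
    using measure_noise_projection_sq_pos_eq_0[OF M indep subg_int subg on] \<eta>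
    by (simp add: cl_weight_nonneg)
next
  case False
  with \<sigma> have \<sigma>_pos: "0 < \<sigma>" by simp
  from False c obtain r where r: "c = ereal r" "0 \<le> r"
    by (cases c) auto
  have "measure M {\<omega>\<in>space M. \<sigma>\<^sup>2 * (11/2 * (real k + r) + 43/10 * ln (6 / \<eta>))
                                 < noise_projection_sq M n Y e d \<omega>}
      \<le> sqrt 2 ^ d * exp (- (11/2 * (real k + r) + 43/10 * ln (6 / \<eta>)) / 4)"
    by (rule measure_noise_projection_sq_gt_le[OF M indep subg_int subg on \<sigma>_pos])
  also have "\<dots> \<le> \<eta> / 3 * 2 powr (- r)"
    by (rule sqrt2_power_exp_le[OF d r(2) \<eta>])
  finally show ?thesis by (simp add: r cl_weight_def)
qed

lemma good_event_exists:
  fixes M :: "'a measure" and e :: "nat set \<Rightarrow> nat \<Rightarrow> nat \<Rightarrow> real" and d :: "nat set \<Rightarrow> nat"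
  assumes M: "prob_space M"
    and indep: "prob_space.indep_vars M (\<lambda>_. borel) Y {..<n}"
    and subg_int: "\<And>i t. i < n \<Longrightarrow> integrable M (\<lambda>\<omega>. exp (t * (Y i \<omega> - integral\<^sup>L M (Y i))))"
    and subg: "\<And>i t. i < n \<Longrightarrow>
          integral\<^sup>L M (\<lambda>\<omega>. exp (t * (Y i \<omega> - integral\<^sup>L M (Y i)))) \<le> exp (\<sigma>\<^sup>2 * t\<^sup>2 / 2)"
    and \<sigma>: "0 \<le> \<sigma>" and cl: "is_coding_length p cl" and \<eta>: "0 < \<eta>" "\<eta> < 1"
    and sys: "\<And>F. F \<subseteq> {..<p} \<Longrightarrow> d F \<le> card F + 1 \<and> orthonormal n (e F) (d F)"
  shows "\<exists>A\<in>sets M. 1 - \<eta> < measure M A \<and>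
    (\<forall>\<omega>\<in>A. \<forall>F\<subseteq>{..<p}. (\<sigma> = 0 \<or> cl F \<noteq> \<infinity>) \<longrightarrow>
       noise_projection_sq M n Y (e F) (d F) \<omega>
         \<le> \<sigma>\<^sup>2 * (11/2 * (real (card F) + real_of_ereal (cl F)) + 43/10 * ln (6 / \<eta>)))"
proof -
  interpret prob_space M by (rule M)
  define FF where "FF = {F. F \<subseteq> {..<p} \<and> (\<sigma> = 0 \<or> cl F \<noteq> \<infinity>)}"
  define bad where "bad F = {\<omega>\<in>space M. \<sigma>\<^sup>2 * (11/2 * (real (card F) + real_of_ereal (cl F))
      + 43/10 * ln (6 / \<eta>)) < noise_projection_sq M n Y (e F) (d F) \<omega>}" for F
  define A where "A = space M - (\<Union>F\<in>FF. bad F)"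
  have FF_Pow: "FF \<subseteq> Pow {..<p}" by (auto simp: FF_def)
  then have FF_finite: "finite FF" by (rule finite_subset) simp
  have bad_sets: "bad F \<in> sets M" if "F \<in> FF" for F
  proof -
    have "orthonormal n (e F) (d F)" using sys that by (auto simp: FF_def)
    note [measurable] = borel_measurable_noise_projection_sq[OF M indep subg_int subg this]
    show ?thesis unfolding bad_def by measurable
  qed
  have bad_le: "measure M (bad F) \<le> \<eta> / 3 * cl_weight (cl F)" if "F \<in> FF" for F
  proof -
    have F: "F \<subseteq> {..<p}" "\<sigma> = 0 \<or> cl F \<noteq> \<infinity>" using that by (auto simp: FF_def)
    show ?thesis unfolding bad_def
      using sys[OF F(1)] cl_nonneg[OF cl F(1)] F(2) \<eta>
      by (intro measure_noise_projection_sq_gt_le_weight[OF M indep subg_int subg \<sigma>]) auto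
  qed
  have "measure M (\<Union>F\<in>FF. bad F) \<le> (\<Sum>F\<in>FF. measure M (bad F))"
    using bad_sets FF_finite by (intro finite_measure_subadditive_finite) auto
  also have "\<dots> \<le> (\<Sum>F\<in>FF. \<eta> / 3 * cl_weight (cl F))"
    using bad_le by (rule sum_mono)
  also have "\<dots> \<le> (\<Sum>F\<in>Pow {..<p}. \<eta> / 3 * cl_weight (cl F))"
    using \<eta> FF_Pow by (intro sum_mono2) (auto simp: cl_weight_nonneg)
  also have "\<dots> = \<eta> / 3 * (\<Sum>F\<in>Pow {..<p}. cl_weight (cl F))"
    by (rule sum_distrib_left[symmetric])
  also have "\<dots> \<le> \<eta> / 3 * 2"
    using \<eta> sum_cl_weight_le_2[OF cl] by (intro mult_left_mono) auto
  finally have "measure M (\<Union>F\<in>FF. bad F) < \<eta>" using \<eta> by simp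
  moreover have "(\<Union>F\<in>FF. bad F) \<in> sets M" using bad_sets FF_finite by blast
  ultimately have "1 - \<eta> < measure M A"
    unfolding A_def by (simp add: prob_compl)
  moreover have "A \<in> sets M" using bad_sets FF_finite by (auto simp: A_def)
  moreover have "noise_projection_sq M n Y (e F) (d F) \<omega>
      \<le> \<sigma>\<^sup>2 * (11/2 * (real (card F) + real_of_ereal (cl F)) + 43/10 * ln (6 / \<eta>))"
    if "\<omega> \<in> A" "F \<subseteq> {..<p}" "\<sigma> = 0 \<or> cl F \<noteq> \<infinity>" for \<omega> F
    using that by (auto simp: A_def FF_def bad_def not_less)
  ultimately show ?thesis by blast
qed

section \<open>The oracle inequality\<close>

lemma projection_systems_exist:
  fixes X :: "nat \<Rightarrow> nat \<Rightarrow> real"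
  shows "\<exists>e d. \<forall>F. finite F \<longrightarrow> d F \<le> card F + 1 \<and> orthonormal n (e F) (d F)
      \<and> in_span n (e F) (d F) v \<and> (\<forall>j\<in>F. in_span n (e F) (d F) (\<lambda>i. X i j))"
proof -
  define V where "V (F :: nat set) = v # map (\<lambda>j i. X i j) (sorted_list_of_set F)" for F
  have "\<forall>F. \<exists>e d. d \<le> length (V F) \<and> orthonormal n e d \<and> (\<forall>u\<in>set (V F). in_span n e d u)"
    using gram_schmidt by blast
  then obtain e d where "\<forall>F. d F \<le> length (V F) \<and> orthonormal n (e F) (d F)
      \<and> (\<forall>u\<in>set (V F). in_span n (e F) (d F) u)"
    by metis
  then show ?thesis by (intro exI[of _ e] exI[of _ d]) (auto simp: V_def)
qed

lemma in_span_matvec_diff: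
  assumes F: "F \<subseteq> {..<p}" "supp p \<beta> \<subseteq> F"
    and sp: "in_span n e d (matvec p X \<gamma>)" "\<And>j. j \<in> F \<Longrightarrow> in_span n e d (\<lambda>i. X i j)"
  shows "in_span n e d (\<lambda>i. matvec p X \<beta> i - matvec p X \<gamma> i)"
proof -
  have "matvec p X \<beta> i = (\<Sum>j\<in>F. \<beta> j * X i j)" for i
  proof -
    have "matvec p X \<beta> i = (\<Sum>j\<in>F. X i j * \<beta> j)"
      unfolding matvec_def using F by (intro sum.mono_neutral_right) (auto simp: supp_def)
    then show ?thesis by (simp add: mult.commute)
  qed
  moreover have "in_span n e d (\<lambda>i. (\<Sum>j\<in>F. \<beta> j * X i j) - matvec p X \<gamma> i)"
    using F(1) sp by (intro in_span_diff in_span_sum) (auto intro: finite_subset)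
  ultimately show ?thesis by simp
qed

lemma matvec_diff: "matvec p X (\<lambda>j. \<beta> j - \<gamma> j) = (\<lambda>i. matvec p X \<beta> i - matvec p X \<gamma> i)"
  by (simp add: matvec_def sum_subtractf right_diff_distrib)

lemma oracle_constants:
  fixes A B N \<delta> \<sigma> c L \<epsilon> :: real
  assumes A: "A \<le> B + 2 * sqrt (\<delta>\<^sup>2 + \<epsilon>)" and N: "N \<le> 10 * B\<^sup>2 + 20/3 * \<delta>\<^sup>2 + 2 * \<epsilon>"
    and \<delta>: "\<delta>\<^sup>2 \<le> \<sigma>\<^sup>2 * (11/2 * c + 43/10 * L)" and "0 \<le> c" "0 \<le> L" "0 \<le> \<sigma>" "0 \<le> \<epsilon>"
  shows "A \<le> B + \<sigma> * sqrt (2 * L) + 2 * sqrt (7.4 * \<sigma>\<^sup>2 * c + (4.7 * \<sigma>\<^sup>2 * L + \<epsilon>))"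
    and "N \<le> 10 * B\<^sup>2 + 37 * \<sigma>\<^sup>2 * c + (29 * \<sigma>\<^sup>2 * L + 2.5 * \<epsilon>)"
proof -
  have "\<sigma>\<^sup>2 * (11/2 * c + 43/10 * L) \<le> \<sigma>\<^sup>2 * (7.4 * c + 4.7 * L)"
    using assms by (intro mult_left_mono) auto
  then have "sqrt (\<delta>\<^sup>2 + \<epsilon>) \<le> sqrt (7.4 * \<sigma>\<^sup>2 * c + (4.7 * \<sigma>\<^sup>2 * L + \<epsilon>))"
    using \<delta> by (intro real_sqrt_le_mono) (simp add: algebra_simps)
  moreover have "0 \<le> \<sigma> * sqrt (2 * L)" using assms by simp
  ultimately show "A \<le> B + \<sigma> * sqrt (2 * L) + 2 * sqrt (7.4 * \<sigma>\<^sup>2 * c + (4.7 * \<sigma>\<^sup>2 * L + \<epsilon>))"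
    using A by linarith
  have "\<sigma>\<^sup>2 * (20/3 * (11/2 * c + 43/10 * L)) \<le> \<sigma>\<^sup>2 * (37 * c + 29 * L)"
    using assms by (intro mult_left_mono) auto
  then have "20/3 * \<delta>\<^sup>2 \<le> 37 * \<sigma>\<^sup>2 * c + 29 * \<sigma>\<^sup>2 * L"
    using \<delta> by (simp add: algebra_simps)
  then show "N \<le> 10 * B\<^sup>2 + 37 * \<sigma>\<^sup>2 * c + (29 * \<sigma>\<^sup>2 * L + 2.5 * \<epsilon>)"
    using N \<open>0 \<le> \<epsilon>\<close> by linarith
qed

lemma least_squares_fit_bounds:
  fixes y \<mu> :: "nat \<Rightarrow> real"
  assumes on: "orthonormal n e d" and F: "F \<subseteq> {..<p}" "supp p \<beta> \<subseteq> F"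
    and sp: "in_span n e d (matvec p X \<gamma>)" "\<And>j. j \<in> F \<Longrightarrow> in_span n e d (\<lambda>i. X i j)"
    and fit: "(norm2 n (\<lambda>i. matvec p X \<beta> i - y i))\<^sup>2 \<le> (norm2 n (\<lambda>i. matvec p X \<gamma> i - y i))\<^sup>2 + \<epsilon>"
    and \<epsilon>: "0 \<le> \<epsilon>"
  defines "S \<equiv> (\<Sum>j<d. (dotp n (\<lambda>i. y i - \<mu> i) (e j))\<^sup>2)"
  shows "norm2 n (\<lambda>i. matvec p X \<beta> i - \<mu> i)
      \<le> norm2 n (\<lambda>i. matvec p X \<gamma> i - \<mu> i) + 2 * sqrt (S + \<epsilon>)"
    and "(norm2 n (matvec p X (\<lambda>j. \<beta> j - \<gamma> j)))\<^sup>2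
      \<le> 10 * (norm2 n (\<lambda>i. matvec p X \<gamma> i - \<mu> i))\<^sup>2 + 20/3 * S + 2 * \<epsilon>"
proof -
  define a b \<xi> where "a = (\<lambda>i. matvec p X \<beta> i - \<mu> i)" "b = (\<lambda>i. matvec p X \<gamma> i - \<mu> i)"
    "\<xi> = (\<lambda>i. y i - \<mu> i)"
  have S: "0 \<le> S" "(sqrt S)\<^sup>2 = S" by (simp_all add: S_def sum_nonneg)
  have "dotp n \<xi> (\<lambda>i. a i - b i) \<le> sqrt S * norm2 n (\<lambda>i. a i - b i)"
    using dotp_le_projection_norm2[OF on in_span_matvec_diff[OF F sp]]
    by (simp add: a_b_\<xi>_def S_def)
  moreover have "(norm2 n (\<lambda>i. a i - \<xi> i))\<^sup>2 \<le> (norm2 n (\<lambda>i. b i - \<xi> i))\<^sup>2 + \<epsilon>"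
    using fit by (simp add: a_b_\<xi>_def)
  ultimately show "norm2 n a \<le> norm2 n b + 2 * sqrt (S + \<epsilon>)"
    and "(norm2 n (matvec p X (\<lambda>j. \<beta> j - \<gamma> j)))\<^sup>2 \<le> 10 * (norm2 n b)\<^sup>2 + 20/3 * S + 2 * \<epsilon>"
    using residual_comparison[of n a \<xi> b \<epsilon> "sqrt S"] S \<epsilon>
    by (simp_all add: matvec_diff a_b_\<xi>_def)
qed

lemma oracle_inequality:
  fixes y \<mu> :: "nat \<Rightarrow> real" and e :: "nat set \<Rightarrow> nat \<Rightarrow> nat \<Rightarrow> real" and d :: "nat set \<Rightarrow> nat"
  assumes cl: "is_coding_length p cl" and \<sigma>: "0 \<le> \<sigma>" and L: "0 \<le> L" and \<epsilon>: "0 \<le> \<epsilon>"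
    and sys: "\<And>F. F \<subseteq> {..<p} \<Longrightarrow> orthonormal n (e F) (d F)
      \<and> in_span n (e F) (d F) (matvec p X \<beta>bar) \<and> (\<forall>j\<in>F. in_span n (e F) (d F) (\<lambda>i. X i j))"
    and noise: "\<And>F. F \<subseteq> {..<p} \<Longrightarrow> \<sigma> = 0 \<or> cl F \<noteq> \<infinity> \<Longrightarrow>
      (\<Sum>j<d F. (dotp n (\<lambda>i. y i - \<mu> i) (e F j))\<^sup>2)
        \<le> \<sigma>\<^sup>2 * (11/2 * (real (card F) + real_of_ereal (cl F)) + 43/10 * L)"
    and fit: "(norm2 n (\<lambda>i. matvec p X \<beta>hat i - y i))\<^sup>2
      \<le> (norm2 n (\<lambda>i. matvec p X \<beta>bar i - y i))\<^sup>2 + \<epsilon>"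
  shows "(let T = ereal (7.4 * \<sigma>\<^sup>2) * cc_vec p cl \<beta>hat + ereal (4.7 * \<sigma>\<^sup>2 * L + \<epsilon>) in
          T \<noteq> \<infinity> \<longrightarrow>
          norm2 n (\<lambda>i. matvec p X \<beta>hat i - \<mu> i)
            \<le> norm2 n (\<lambda>i. matvec p X \<beta>bar i - \<mu> i) + \<sigma> * sqrt (2 * L) + 2 * sqrt (real_of_ereal T))
       \<and> (subadditive_cc p cl \<longrightarrow>
          ereal (real n) * rho_minus n p X cl (cc_vec p cl \<beta>hat + cc_vec p cl \<beta>bar)
              * ereal ((norm2 p (\<lambda>j. \<beta>hat j - \<beta>bar j))\<^sup>2)
            \<le> ereal (10 * (norm2 n (\<lambda>i. matvec p X \<beta>bar i - \<mu> i))\<^sup>2)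
               + ereal (37 * \<sigma>\<^sup>2) * cc_vec p cl \<beta>hat + ereal (29 * \<sigma>\<^sup>2 * L + 2.5 * \<epsilon>))"
proof -
  obtain F where F: "F \<subseteq> {..<p}" "supp p \<beta>hat \<subseteq> F" "cc_vec p cl \<beta>hat = cc_set cl F"
    using cc_vec_attained by blast
  define A where "A = norm2 n (\<lambda>i. matvec p X \<beta>hat i - \<mu> i)"
  define B where "B = norm2 n (\<lambda>i. matvec p X \<beta>bar i - \<mu> i)"
  define N where "N = (norm2 n (matvec p X (\<lambda>j. \<beta>hat j - \<beta>bar j)))\<^sup>2"
  define S where "S = (\<Sum>j<d F. (dotp n (\<lambda>i. y i - \<mu> i) (e F j))\<^sup>2)"
  have A: "A \<le> B + 2 * sqrt (S + \<epsilon>)" and N: "N \<le> 10 * B\<^sup>2 + 20/3 * S + 2 * \<epsilon>"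
    using least_squares_fit_bounds[OF _ F(1,2) _ _ fit \<epsilon>, of "e F" "d F"] sys[OF F(1)]
    unfolding A_def B_def N_def S_def by blast+
  show ?thesis
  proof (cases "\<sigma> \<noteq> 0 \<and> cl F = \<infinity>")
    case True
    then have "cc_vec p cl \<beta>hat = \<infinity>" "0 < \<sigma>\<^sup>2" by (simp_all add: F(3) cc_set_def)
    then show ?thesis by (simp add: Let_def)
  next
    case False
    txt \<open>If cl F is infinite then \<sigma> = 0, and c = 0 works because 0 * \<infinity> = 0 in ereal.\<close>
    obtain c where c: "0 \<le> c" "S \<le> \<sigma>\<^sup>2 * (11/2 * c + 43/10 * L)"
      and cc: "\<And>k. ereal (k * \<sigma>\<^sup>2) * cc_vec p cl \<beta>hat = ereal (k * \<sigma>\<^sup>2 * c)"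
    proof (cases "cl F = \<infinity>")
      case True
      with False have "\<sigma> = 0" by simp
      with noise[OF F(1)] show ?thesis by (intro that[of 0]) (simp_all add: S_def zero_ereal_def[symmetric])
    next
      case False
      with cl_nonneg[OF cl F(1)] obtain r where "cl F = ereal r" "0 \<le> r" by (cases "cl F") auto
      with noise[OF F(1)] show ?thesis
        by (intro that[of "real (card F) + r"]) (simp_all add: S_def F(3) cc_set_def)
    qed
    have "0 \<le> S" by (simp add: S_def sum_nonneg)
    then have bounds: "A \<le> B + \<sigma> * sqrt (2 * L) + 2 * sqrt (7.4 * \<sigma>\<^sup>2 * c + (4.7 * \<sigma>\<^sup>2 * L + \<epsilon>))"
      "N \<le> 10 * B\<^sup>2 + 37 * \<sigma>\<^sup>2 * c + (29 * \<sigma>\<^sup>2 * L + 2.5 * \<epsilon>)"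
      using oracle_constants[of A B "sqrt S" \<epsilon> N \<sigma> c L] A N c \<sigma> L \<epsilon> by simp_all
    have T: "ereal (7.4 * \<sigma>\<^sup>2) * cc_vec p cl \<beta>hat + ereal (4.7 * \<sigma>\<^sup>2 * L + \<epsilon>)
        = ereal (7.4 * \<sigma>\<^sup>2 * c + (4.7 * \<sigma>\<^sup>2 * L + \<epsilon>))"
      using cc[of "7.4"] by simp
    have R: "ereal (37 * \<sigma>\<^sup>2) * cc_vec p cl \<beta>hat = ereal (37 * \<sigma>\<^sup>2 * c)"
      using cc[of 37] by simp
    show ?thesis
      unfolding Let_def T R using bounds rho_minus_cc_vec_mult_le[of p cl n X \<beta>hat \<beta>bar]
      by (auto simp: A_def B_def N_def intro: order_trans)
  qed
qed

theorem theorem2: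
  fixes M :: "'a measure" and n p :: nat and X :: "nat \<Rightarrow> nat \<Rightarrow> real"
    and Y :: "nat \<Rightarrow> 'a \<Rightarrow> real" and \<sigma> \<eta> :: real
    and cl :: "nat set \<Rightarrow> ereal" and \<beta>bar :: "nat \<Rightarrow> real"
  assumes M: "prob_space M"
    and indep: "prob_space.indep_vars M (\<lambda>_. borel) Y {..<n}"
    and intY: "\<And>i. i < n \<Longrightarrow> integrable M (Y i)"
    and \<sigma>: "0 \<le> \<sigma>"
    and subg_int: "\<And>i t. i < n \<Longrightarrow>
          integrable M (\<lambda>\<omega>. exp (t * (Y i \<omega> - integral\<^sup>L M (Y i))))"
    and subg: "\<And>i t. i < n \<Longrightarrow>
          integral\<^sup>L M (\<lambda>\<omega>. exp (t * (Y i \<omega> - integral\<^sup>L M (Y i)))) \<le> exp (\<sigma>\<^sup>2 * t\<^sup>2 / 2)"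
    and cl: "is_coding_length p cl"
    and \<eta>: "0 < \<eta>" "\<eta> < 1"
  shows "\<exists>A \<in> sets M. measure M A > 1 - \<eta> \<and>
    (\<forall>\<omega> \<in> A. \<forall>\<epsilon> \<ge> 0. \<forall>\<beta>hat.
       (norm2 n (\<lambda>i. matvec p X \<beta>hat i - Y i \<omega>))\<^sup>2
         \<le> (norm2 n (\<lambda>i. matvec p X \<beta>bar i - Y i \<omega>))\<^sup>2 + \<epsilon> \<longrightarrow>
       (let T = ereal (7.4 * \<sigma>\<^sup>2) * cc_vec p cl \<beta>hat + ereal (4.7 * \<sigma>\<^sup>2 * ln (6 / \<eta>) + \<epsilon>) in
          T \<noteq> \<infinity> \<longrightarrow>
          norm2 n (\<lambda>i. matvec p X \<beta>hat i - integral\<^sup>L M (Y i))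
            \<le> norm2 n (\<lambda>i. matvec p X \<beta>bar i - integral\<^sup>L M (Y i))
               + \<sigma> * sqrt (2 * ln (6 / \<eta>)) + 2 * sqrt (real_of_ereal T))
       \<and> (subadditive_cc p cl \<longrightarrow>
          ereal (real n) * rho_minus n p X cl (cc_vec p cl \<beta>hat + cc_vec p cl \<beta>bar)
              * ereal ((norm2 p (\<lambda>j. \<beta>hat j - \<beta>bar j))\<^sup>2)
            \<le> ereal (10 * (norm2 n (\<lambda>i. matvec p X \<beta>bar i - integral\<^sup>L M (Y i)))\<^sup>2)
               + ereal (37 * \<sigma>\<^sup>2) * cc_vec p cl \<beta>hat
               + ereal (29 * \<sigma>\<^sup>2 * ln (6 / \<eta>) + 2.5 * \<epsilon>)))"
proof -
  obtain e d where sys: "\<forall>F. finite F \<longrightarrow> d F \<le> card F + 1 \<and> orthonormal n (e F) (d F)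
      \<and> in_span n (e F) (d F) (matvec p X \<beta>bar) \<and> (\<forall>j\<in>F. in_span n (e F) (d F) (\<lambda>i. X i j))"
    using projection_systems_exist by blast
  have finite: "finite F" if "F \<subseteq> {..<p}" for F
    using that by (rule finite_subset) simp
  obtain A where A: "A \<in> sets M" "1 - \<eta> < measure M A"
    and good: "\<forall>\<omega>\<in>A. \<forall>F\<subseteq>{..<p}. (\<sigma> = 0 \<or> cl F \<noteq> \<infinity>) \<longrightarrow>
      noise_projection_sq M n Y (e F) (d F) \<omega>
        \<le> \<sigma>\<^sup>2 * (11/2 * (real (card F) + real_of_ereal (cl F)) + 43/10 * ln (6 / \<eta>))"
    using good_event_exists[OF M indep subg_int subg \<sigma> cl \<eta>, of d e] sys finite by blast
  have L: "0 \<le> ln (6 / \<eta>)" using \<eta> by simp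
  show ?thesis
  proof (intro bexI[OF _ A(1)] conjI[OF A(2)] ballI allI impI oracle_inequality[OF cl \<sigma> L])
    fix F :: "nat set" assume "F \<subseteq> {..<p}"
    then show "orthonormal n (e F) (d F) \<and> in_span n (e F) (d F) (matvec p X \<beta>bar)
        \<and> (\<forall>j\<in>F. in_span n (e F) (d F) (\<lambda>i. X i j))"
      using sys finite by blast
  next
    fix \<omega> F assume \<omega>: "\<omega> \<in> A" and F: "F \<subseteq> {..<p}" "\<sigma> = 0 \<or> cl F \<noteq> \<infinity>"
    show "(\<Sum>j<d F. (dotp n (\<lambda>i. Y i \<omega> - integral\<^sup>L M (Y i)) (e F j))\<^sup>2)
        \<le> \<sigma>\<^sup>2 * (11/2 * (real (card F) + real_of_ereal (cl F)) + 43/10 * ln (6 / \<eta>))"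
      using good[rule_format, OF \<omega> F] unfolding noise_projection_sq_def .
  qed
qed

end
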